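(* The size $z_{78}$ of the LZ78 factorization satisfies (the alphabet being allowed to contain as many distinct characters as needed): substitutions: $\mathsf{MS}_{\mathrm{sub}}(z_{78},n)=\Omega(n^{1/4})$, $\mathsf{AS}_{\mathrm{sub}}(z_{78},n)=\Omega(z_{78}^{3/2})$ and $\mathsf{AS}_{\mathrm{sub}}(z_{78},n)=\Omega(n^{3/4})$; deletions: $\mathsf{MS}_{\mathrm{del}}(z_{78},n)=\Omega(n^{1/4})$, $\mathsf{AS}_{\mathrm{del}}(z_{78},n)=\Omega(z_{78}^{3/2})$ and $\mathsf{AS}_{\mathrm{del}}(z_{78},n)=\Omega(n^{3/4})$.
   Context: $\mathsf{ed}$ is the edit distance. $\mathsf{MS}_{\mathrm{sub}}(C,n)=\max_{T\in\Sigma^n}\{C(T')/C(T): T'\in\Sigma^n,\ \mathsf{ed}(T,T')=1\}$, $\mathsf{MS}_{\mathrm{del}}$ analogous for $T'\in\Sigma^{n-1}$, and $\mathsf{AS}_\ast$ analogous with $C(T')-C(T)$. The bound $\Omega(z_{78}^{3/2})$ is in terms of $z_{78}(T)$ of the original string. The LZ78 factorization of $T$ is $T=f_1\cdots f_z$ where, with $f_0=\varepsilon$, for each $1\le i<z$ the factor $f_i$ is the longest prefix of $f_i\cdots f_z$ such that $f_i[1..|f_i|-1]=f_j$ for some $0\le j<i$, and $f_z$ is the remaining suffix; $z_{78}(T)=z$. *)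

theory Defs
  imports Complex_Main "HOL-Library.Landau_Symbols"
begin

fun ed :: "'a list \<Rightarrow> 'a list \<Rightarrow> nat" where
  "ed [] ys = length ys"
| "ed (x # xs) [] = Suc (length xs)"
| "ed (x # xs) (y # ys) =
     min (min (ed xs (y # ys) + 1) (ed (x # xs) ys + 1))
         (ed xs ys + (if x = y then 0 else 1))"

text \<open>D is the list of factors produced so far (f_1..f_{i-1});
  the empty factor f_0 is always available.
  The fuel argument only ensures termination (each step consumes at least one symbol).\<close>

fun lz78_aux :: "nat \<Rightarrow> 'a list list \<Rightarrow> 'a list \<Rightarrow> 'a list list" where
  "lz78_aux 0 D s = []"
| "lz78_aux (Suc m) D s =
     (if s = [] then []
      else (let k = (GREATEST k. 1 \<le> k \<and> k \<le> length s \<and>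
                                 butlast (take k s) \<in> set ([] # D));
                f = take k s
            in f # lz78_aux m (D @ [f]) (drop k s)))"

definition lz78 :: "'a list \<Rightarrow> 'a list list" where
  "lz78 T = lz78_aux (length T) [] T"

definition z78 :: "'a list \<Rightarrow> nat" where
  "z78 T = length (lz78 T)"

definition MS_sub :: "('a list \<Rightarrow> nat) \<Rightarrow> nat \<Rightarrow> real" where
  "MS_sub C n = Sup {real (C T') / real (C T) | T T'.
      length T = n \<and> length T' = n \<and> ed T T' = 1}"

definition MS_del :: "('a list \<Rightarrow> nat) \<Rightarrow> nat \<Rightarrow> real" where
  "MS_del C n = Sup {real (C T') / real (C T) | T T'.
      length T = n \<and> length T' = n - 1 \<and> ed T T' = 1}"

definition AS_sub :: "('a list \<Rightarrow> nat) \<Rightarrow> nat \<Rightarrow> real" where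
  "AS_sub C n = Sup {real (C T') - real (C T) | T T'.
      length T = n \<and> length T' = n \<and> ed T T' = 1}"

definition AS_del :: "('a list \<Rightarrow> nat) \<Rightarrow> nat \<Rightarrow> real" where
  "AS_del C n = Sup {real (C T') - real (C T) | T T'.
      length T = n \<and> length T' = n - 1 \<and> ed T T' = 1}"

end

theory Submission
  imports Defs "HOL-Library.Sublist"
begin

(* For a parameter S let M = 4 S^2, L = M + 1 and B = 2 S^2 + S + 1, and let T be the text
     u_1 | u_1 u_2 | ... | u_1 ... u_L | u_2 | y_1 | u_3 | y_1 y_2 | ... | u_(M+1) | y_1 ... y_M |
     y_1 ... y_M e_1 | ... | y_1 ... y_M e_B | padding,
   where the bars mark its LZ78 factorization and the padding a | a a | ... | p_1 | p_2 | ...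
   over fresh letters adjusts the length to any n ~ 24 S^4 at the cost of O(S^2) phrases.
   So z78 T = O(S^2).  Deleting the leading u_1, or replacing it by a fresh letter u_0, shifts
   the parse: the u-part is cut as u_1 ... u_(i-1) | u_i, then each u_(i+1) is glued to y_1,
   leaving the phrases y_2 ... y_i.  Hence y_1 ... y_b only becomes a phrase in the copy ending
   with e_b, whose remaining y's are cut into runs of length phase b <= 2 S.  All these runs
   are new phrases, so the perturbed text has Omega(S^3) phrases, and S ~ n^(1/4),
   S^3 ~ n^(3/4) ~ (z78 T)^(3/2). *)

lemma hd_prefix: "prefix f w \<Longrightarrow> f \<noteq> [] \<Longrightarrow> hd w = hd f"
  by (auto simp: prefix_def)

lemma prefix_snoc_notin: "c \<notin> set xs \<Longrightarrow> prefix xs (ys @ [c]) \<longleftrightarrow> prefix xs ys"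
  by auto

lemma mem_concat_map_uptI:
  "a \<le> j \<Longrightarrow> j < b \<Longrightarrow> w \<in> set (F j) \<Longrightarrow> w \<in> set (concat (map F [a..<b]))"
  by auto

lemma concat_concat_map: "concat (concat (map F xs)) = concat (map (\<lambda>x. concat (F x)) xs)"
  by (induction xs) auto

lemma length_concat_map_ge:
  "(\<And>x. x \<in> set xs \<Longrightarrow> c \<le> length (F x)) \<Longrightarrow> c * length xs \<le> length (concat (map F xs))"
  by (induction xs) (auto intro: add_mono)

section \<open>Prescribed LZ78 factorizations\<close>

definition lz78_factor :: "'a list list \<Rightarrow> 'a list \<Rightarrow> bool" where
  "lz78_factor D f \<longleftrightarrow> f \<noteq> [] \<and> butlast f \<in> set ([] # D) \<and> (\<forall>w\<in>set D. \<not> prefix f w)"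

fun lz78_factors :: "'a list list \<Rightarrow> 'a list list \<Rightarrow> bool" where
  "lz78_factors D [] = True"
| "lz78_factors D (f # fs) \<longleftrightarrow> lz78_factor D f \<and> lz78_factors (D @ [f]) fs"

text \<open>A factor satisfying lz78_factor D f is chosen by the greedy parser whatever text
  follows it: a longer candidate would have as its butlast a phrase of which f is a prefix.\<close>
lemma lz78_aux_factor:
  assumes f: "lz78_factor D f"
  shows "lz78_aux (Suc m) D (f @ r) = f # lz78_aux m (D @ [f]) r"
proof -
  let ?s = "f @ r"
  let ?P = "\<lambda>k. 1 \<le> k \<and> k \<le> length ?s \<and> butlast (take k ?s) \<in> set ([] # D)"
  have "f \<noteq> []" using f by (simp add: lz78_factor_def)
  have "(GREATEST k. ?P k) = length f"
  proof (rule Greatest_equality)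
    show "?P (length f)" using f \<open>f \<noteq> []\<close> by (simp add: lz78_factor_def Suc_leI)
  next
    fix k assume k: "?P k"
    show "k \<le> length f"
    proof (rule ccontr)
      assume "\<not> k \<le> length f"
      then have "butlast (take k ?s) = f @ butlast (take (k - length f) r)"
        using k by (auto simp: butlast_append)
      then have "prefix f (butlast (take k ?s))" "butlast (take k ?s) \<in> set D"
        using k \<open>f \<noteq> []\<close> by auto
      with f show False by (auto simp: lz78_factor_def)
    qed
  qed
  then show ?thesis using \<open>f \<noteq> []\<close> by (simp add: Let_def)
qed

lemma lz78_factor_by_head:
  assumes "f \<noteq> []" "butlast f \<in> set ([] # D)"
    and "\<And>w. w \<in> set D \<Longrightarrow> w \<noteq> [] \<Longrightarrow> hd w = hd f \<Longrightarrow> length w < length f"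
  shows "lz78_factor D f"
  unfolding lz78_factor_def
proof (intro conjI ballI notI)
  fix w assume "w \<in> set D" "prefix f w"
  then show False using assms(1) assms(3)[of w] prefix_length_le[of f w] by (auto simp: prefix_def)
qed (use assms in auto)

lemma lz78_factor_by_fresh_letter:
  assumes "butlast f \<in> set ([] # D)" "c \<in> set f" "\<And>w. w \<in> set D \<Longrightarrow> c \<notin> set w"
  shows "lz78_factor D f"
  unfolding lz78_factor_def using assms set_mono_prefix by fastforce

lemma lz78_aux_Nil [simp]: "lz78_aux m D [] = []"
  by (cases m) auto

lemma lz78_factors_append [simp]:
  "lz78_factors D (xs @ ys) \<longleftrightarrow> lz78_factors D xs \<and> lz78_factors (D @ xs) ys"
  by (induction xs arbitrary: D) auto

lemma lz78_aux_concat: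
  assumes "lz78_factors D fs" "length (concat fs) + length r \<le> m"
  shows "lz78_aux m D (concat fs @ r) = fs @ lz78_aux (m - length fs) (D @ fs) r"
  using assms
proof (induction fs arbitrary: D m)
  case (Cons f fs)
  then have f: "lz78_factor D f" and "f \<noteq> []" by (auto simp: lz78_factor_def)
  then obtain m' where m: "m = Suc m'" using Cons.prems(2) by (cases m) auto
  have "length (concat fs) + length r \<le> m'"
    using Cons.prems(2) \<open>f \<noteq> []\<close> m by (cases f) auto
  then show ?case
    using lz78_aux_factor[OF f, of m' "concat fs @ r"] Cons m by simp
qed simp

lemma z78_concat: "lz78_factors [] fs \<Longrightarrow> z78 (concat fs) = length fs"
  unfolding z78_def lz78_def using lz78_aux_concat[of "[]" fs "[]"] by simp

lemma length_lz78_aux_le: "length (lz78_aux m D s) \<le> m"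
  by (induction m arbitrary: D s) (auto simp: Let_def)

lemma z78_le_length: "z78 T \<le> length T"
  unfolding z78_def lz78_def by (rule length_lz78_aux_le)

lemma lz78_factors_map_upt:
  assumes "\<And>b. a \<le> b \<Longrightarrow> b < c \<Longrightarrow> lz78_factor (D @ map F [a..<b]) (F b)"
  shows "lz78_factors D (map F [a..<c])"
  using assms by (induction c) auto

lemma lz78_factors_concat_map_upt:
  assumes "\<And>b. a \<le> b \<Longrightarrow> b < c \<Longrightarrow> lz78_factors (D @ concat (map F [a..<b])) (F b)"
  shows "lz78_factors D (concat (map F [a..<c]))"
  using assms by (induction c) auto

lemma ed_self [simp]: "ed xs xs = 0"
  by (induction xs) auto

lemma ed_eq_0D: "ed xs ys = 0 \<Longrightarrow> xs = ys"
  by (induction xs ys rule: ed.induct) (auto split: if_splits)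

lemma ed_Cons_Cons_neq: "x \<noteq> y \<Longrightarrow> ed (x # xs) (y # xs) = 1"
proof -
  assume "x \<noteq> y"
  then have "ed (x # xs) (y # xs) \<le> 1" and "ed (x # xs) (y # xs) \<noteq> 0"
    using ed_eq_0D by (auto simp: min_le_iff_disj)
  then show ?thesis by linarith
qed

lemma ed_Cons_self: "ed (x # xs) xs = 1"
proof (cases xs)
  case (Cons y ys)
  have "ed (x # xs) xs \<noteq> 0" using ed_eq_0D[of "x # xs" xs] by auto
  moreover have "ed (x # xs) xs \<le> 1" using Cons by (simp add: min_le_iff_disj)
  ultimately show ?thesis by linarith
qed simp

lemma real_div_le_self: "real a / real b \<le> real a"
  by (cases b) (simp_all add: divide_le_eq mult_le_cancel_left1)

lemma le_Sup_of_bounded: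
  fixes X :: "real set"
  assumes "x \<in> X" "\<And>y. y \<in> X \<Longrightarrow> y \<le> B"
  shows "x \<le> Sup X"
  using assms by (meson bdd_aboveI cSup_upper)

context
  fixes C :: "'a list \<Rightarrow> nat"
  assumes C_le_length: "\<And>T. C T \<le> length T"
begin

lemma ratio_le_length: "real (C T') / real (C T) \<le> real (length T')"
  using real_div_le_self C_le_length by (meson of_nat_le_iff order_trans)

lemma diff_le_length: "real (C T') - real (C T) \<le> real (length T')"
  using C_le_length[of T'] by simp

lemma MS_sub_ge:
  "length T = n \<Longrightarrow> length T' = n \<Longrightarrow> ed T T' = 1 \<Longrightarrow> real (C T') / real (C T) \<le> MS_sub C n"
  unfolding MS_sub_def
  by (rule le_Sup_of_bounded[where B = "real n"]) (auto intro: order_trans[OF ratio_le_length])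

lemma MS_del_ge:
  "length T = n \<Longrightarrow> length T' = n - 1 \<Longrightarrow> ed T T' = 1 \<Longrightarrow>
    real (C T') / real (C T) \<le> MS_del C n"
  unfolding MS_del_def
  by (rule le_Sup_of_bounded[where B = "real n"]) (auto intro: order_trans[OF ratio_le_length])

lemma AS_sub_ge:
  "length T = n \<Longrightarrow> length T' = n \<Longrightarrow> ed T T' = 1 \<Longrightarrow> real (C T') - real (C T) \<le> AS_sub C n"
  unfolding AS_sub_def
  by (rule le_Sup_of_bounded[where B = "real n"]) (auto intro: order_trans[OF diff_le_length])

lemma AS_del_ge:
  "length T = n \<Longrightarrow> length T' = n - 1 \<Longrightarrow> ed T T' = 1 \<Longrightarrow>
    real (C T') - real (C T) \<le> AS_del C n"
  unfolding AS_del_def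
  by (rule le_Sup_of_bounded[where B = "real n"]) (auto intro: order_trans[OF diff_le_length])

end

lemma bigomega_of_eventually_ge:
  fixes f g :: "nat \<Rightarrow> real"
  assumes "0 < c" "\<forall>\<^sub>F n in sequentially. c * g n \<le> f n" "\<And>n. 0 \<le> g n"
  shows "f \<in> \<Omega>(g)"
proof (rule landau_omega.bigI[OF assms(1)])
  show "\<forall>\<^sub>F n in at_top. c * norm (g n) \<le> norm (f n)"
    using assms(2) by (rule eventually_mono) (use assms(3) in force)
qed

section \<open>Letters, runs and phases\<close>

definition ltr_u :: "nat \<Rightarrow> nat" where "ltr_u j = 5 * j"
definition ltr_y :: "nat \<Rightarrow> nat" where "ltr_y j = 5 * j + 1"
definition ltr_e :: "nat \<Rightarrow> nat" where "ltr_e j = 5 * j + 2"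
definition ltr_a :: nat where "ltr_a = 3"
definition ltr_p :: "nat \<Rightarrow> nat" where "ltr_p j = 5 * j + 4"

lemma letters_distinct [simp]:
  "ltr_u i \<noteq> ltr_y j" "ltr_u i \<noteq> ltr_e j" "ltr_u i \<noteq> ltr_a" "ltr_u i \<noteq> ltr_p j"
  "ltr_y i \<noteq> ltr_e j" "ltr_y i \<noteq> ltr_a" "ltr_y i \<noteq> ltr_p j"
  "ltr_e i \<noteq> ltr_a" "ltr_e i \<noteq> ltr_p j" "ltr_a \<noteq> ltr_p j"
  unfolding ltr_u_def ltr_y_def ltr_e_def ltr_a_def ltr_p_def by presburger+

lemmas letters_distinct' [simp] = letters_distinct[symmetric]

lemma letters_inj [simp]:
  "ltr_u i = ltr_u j \<longleftrightarrow> i = j" "ltr_y i = ltr_y j \<longleftrightarrow> i = j"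
  "ltr_e i = ltr_e j \<longleftrightarrow> i = j" "ltr_p i = ltr_p j \<longleftrightarrow> i = j"
  unfolding ltr_u_def ltr_y_def ltr_e_def ltr_p_def by auto

definition y_run :: "nat \<Rightarrow> nat \<Rightarrow> nat list" where "y_run s l = map ltr_y [s..<s + l]"
definition u_run :: "nat \<Rightarrow> nat list" where "u_run i = map ltr_u [1..<Suc i]"

lemma y_run_0 [simp]: "y_run s 0 = []" by (simp add: y_run_def)
lemma length_y_run [simp]: "length (y_run s l) = l" by (simp add: y_run_def)
lemma length_u_run [simp]: "length (u_run i) = i" by (simp add: u_run_def)
lemma y_run_eq_Nil_iff [simp]: "y_run s l = [] \<longleftrightarrow> l = 0" by (auto simp: y_run_def)
lemma u_run_eq_Nil_iff [simp]: "u_run i = [] \<longleftrightarrow> i = 0" by (simp add: u_run_def)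
lemma hd_y_run [simp]: "0 < l \<Longrightarrow> hd (y_run s l) = ltr_y s" by (simp add: y_run_def upt_rec)
lemma hd_u_run [simp]: "0 < i \<Longrightarrow> hd (u_run i) = ltr_u 1" by (simp add: u_run_def upt_rec)
lemma set_y_run: "set (y_run s l) = ltr_y ` {s..<s + l}" by (simp add: y_run_def)
lemma set_y_run_subset: "set (y_run s l) \<subseteq> range ltr_y" by (auto simp: set_y_run)
lemma set_u_run: "set (u_run i) = ltr_u ` {1..i}" by (auto simp: u_run_def)

lemma y_run_append: "y_run s l1 @ y_run (s + l1) l2 = y_run s (l1 + l2)"
proof -
  have "[s..<s + (l1 + l2)] = [s..<s + l1] @ [s + l1..<s + (l1 + l2)]"
    using upt_add_eq_append[of s "s + l1" l2] by (simp add: add.assoc)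
  then show ?thesis unfolding y_run_def by (simp add: add.assoc)
qed

lemma butlast_y_run: "butlast (y_run s l) = y_run s (l - 1)"
  unfolding y_run_def by (cases l) (simp_all add: map_butlast[symmetric])

lemma butlast_u_run: "butlast (u_run i) = u_run (i - 1)"
  unfolding u_run_def by (cases i) (simp_all add: map_butlast[symmetric])

lemma y_run_Suc: "y_run s (Suc l) = ltr_y s # y_run (Suc s) l"
  unfolding y_run_def by (simp add: upt_rec)

lemma u_run_Suc: "u_run (Suc i) = u_run i @ [ltr_u (Suc i)]"
  unfolding u_run_def by simp

fun phase_start :: "nat \<Rightarrow> nat" where
  "phase_start 0 = 2"
| "phase_start (Suc m) = phase_start m + m"

definition phase :: "nat \<Rightarrow> nat" where
  "phase b = (LEAST m. b < phase_start (Suc m))"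

lemma phase_start_mono: "m1 \<le> m2 \<Longrightarrow> phase_start m1 \<le> phase_start m2"
  by (induction m2) (auto simp: le_Suc_eq)

lemma phase_start_ge_2: "2 \<le> phase_start m"
  using phase_start_mono[of 0 m] by simp

lemma phase_start_closed_form: "2 * phase_start m + m = m * m + 4"
  by (induction m) (auto simp: algebra_simps)

lemma less_phase_start_Suc_phase: "b < phase_start (Suc (phase b))"
proof -
  have "b < phase_start (Suc b)"
    by (induction b) (auto intro: order.strict_trans2[OF _ phase_start_mono])
  then show ?thesis unfolding phase_def by (rule LeastI)
qed

lemma phase_le: "b < phase_start (Suc m) \<Longrightarrow> phase b \<le> m"
  unfolding phase_def by (rule Least_le)

lemma phase_bounds:
  assumes "2 \<le> b"
  shows "1 \<le> phase b" "phase_start (phase b) \<le> b" "b < phase_start (phase b) + phase b"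
proof -
  show "b < phase_start (phase b) + phase b"
    using less_phase_start_Suc_phase[of b] by simp
  show "phase_start (phase b) \<le> b"
  proof (cases "phase b")
    case (Suc m)
    then have "\<not> b < phase_start (Suc m)" using phase_le[of b m] by auto
    with Suc show ?thesis by simp
  qed (use assms in simp)
  then show "1 \<le> phase b"
    using assms less_phase_start_Suc_phase[of b] by (cases "phase b") auto
qed

lemma phase_eqI:
  assumes "phase_start m \<le> b" "b < phase_start m + m"
  shows "phase b = m"
proof (rule antisym)
  show "phase b \<le> m" using assms by (intro phase_le) simp
  show "m \<le> phase b"
  proof (rule ccontr)
    assume "\<not> m \<le> phase b"
    then have "phase_start (Suc (phase b)) \<le> phase_start m" by (intro phase_start_mono) simp
    with less_phase_start_Suc_phase[of b] assms show False by simp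
  qed
qed

lemma phase_mono: "b' \<le> b \<Longrightarrow> phase b' \<le> phase b"
  using less_phase_start_Suc_phase[of b] by (intro phase_le) simp

section \<open>Blocks\<close>

text \<open>The factors of y_1 ... y_M e_b in the perturbed parse: y_1 ... y_b, then runs of length
  phase b, then the remainder together with e_b.\<close>

definition y_chunk :: "nat \<Rightarrow> nat \<Rightarrow> nat list" where
  "y_chunk b j = y_run (b + 1 + j * phase b) (phase b)"

definition block_tail :: "nat \<Rightarrow> nat \<Rightarrow> nat list" where
  "block_tail M b = y_run (M + 1 - (M - b) mod phase b) ((M - b) mod phase b) @ [ltr_e b]"

definition block :: "nat \<Rightarrow> nat \<Rightarrow> nat list list" where
  "block M b = y_run 1 b # map (y_chunk b) [0..<(M - b) div phase b] @ [block_tail M b]"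

text \<open>Since phase 1 = 0, and x div 0 = 0 and x mod 0 = x, the first block has no runs of
  length phase 1: it consists of y_1 and y_2 ... y_M e_1.\<close>

lemma phase_1: "phase 1 = 0"
  using phase_le[of 1 0] by simp

lemma length_block: "length (block M b) = (M - b) div phase b + 2"
  by (simp add: block_def)

lemma set_block:
  "set (block M b) =
    insert (y_run 1 b) (insert (block_tail M b) (y_chunk b ` {..<(M - b) div phase b}))"
  by (auto simp: block_def)

lemma concat_map_y_chunk: "concat (map (y_chunk b) [0..<q]) = y_run (b + 1) (q * phase b)"
proof (induction q)
  case (Suc q)
  have "y_run (b + 1) (q * phase b) @ y_chunk b q = y_run (b + 1) (q * phase b + phase b)"
    unfolding y_chunk_def using y_run_append[of "b + 1" "q * phase b" "phase b"] by simp
  with Suc show ?case by (simp add: add.commute)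
qed simp

lemma concat_block:
  assumes "b \<le> M"
  shows "concat (block M b) = y_run 1 M @ [ltr_e b]"
proof -
  define q where "q = (M - b) div phase b"
  define r where "r = (M - b) mod phase b"
  have M: "M = b + q * phase b + r" using assms unfolding q_def r_def by simp
  have "concat (block M b) =
    y_run 1 b @ y_run (1 + b) (q * phase b) @ y_run (1 + (b + q * phase b)) r @ [ltr_e b]"
    unfolding block_def block_tail_def q_def[symmetric] r_def[symmetric]
    by (simp add: concat_map_y_chunk M)
  also have "\<dots> = y_run 1 M @ [ltr_e b]"
    by (simp only: y_run_append append_assoc[symmetric]) (simp add: M add.assoc)
  finally show ?thesis .
qed

lemma y_run_in_block:
  assumes "1 \<le> m" "phase_start m < s" "s + m \<le> M + 1"
  obtains b' where "2 \<le> b'" "b' < phase_start (Suc m)" "y_run s m \<in> set (block M b')"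
proof
  define t where "t = (s - 1 - phase_start m) mod m"
  define j where "j = (s - 1 - phase_start m) div m"
  define b' where "b' = phase_start m + t"
  have "t < m" using assms(1) unfolding t_def by simp
  then have phase: "phase b' = m" unfolding b'_def by (intro phase_eqI) simp_all
  have s: "s = b' + 1 + j * m" using assms(2) unfolding b'_def t_def j_def by simp
  then have "Suc j * m \<le> M - b'" using assms(3) by simp
  then have "Suc j \<le> (M - b') div m"
    using assms(1) by (simp only: less_eq_div_iff_mult_less_eq)
  then have "j < (M - b') div m" by simp
  then show "y_run s m \<in> set (block M b')"
    unfolding set_block y_chunk_def phase s by blast
  show "2 \<le> b'" using phase_start_ge_2[of m] unfolding b'_def by simp
  show "b' < phase_start (Suc m)" using \<open>t < m\<close> unfolding b'_def by simp
qed

lemma prefix_y_run_iff: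
  "0 < l \<Longrightarrow> prefix (y_run s l) (y_run s' l') \<longleftrightarrow> s = s' \<and> l \<le> l'"
proof
  assume "0 < l" "prefix (y_run s l) (y_run s' l')"
  then show "s = s' \<and> l \<le> l'"
    using hd_prefix[of "y_run s l"] prefix_length_le by fastforce
next
  assume "s = s' \<and> l \<le> l'"
  then show "prefix (y_run s l) (y_run s' l')"
    using y_run_append[of s l "l' - l"] by (metis le_add_diff_inverse prefixI)
qed

lemma prefix_y_run_block_tail:
  "0 < l \<Longrightarrow> prefix (y_run s l) (block_tail M b) \<longleftrightarrow>
    s = M + 1 - (M - b) mod phase b \<and> l \<le> (M - b) mod phase b"
  unfolding block_tail_def by (subst prefix_snoc_notin) (auto simp: set_y_run prefix_y_run_iff)

lemma add_mult_ne_add_mult: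
  fixes b b' m j j' :: nat
  assumes "b' < b" "b < b' + m"
  shows "b + j * m \<noteq> b' + j' * m"
proof (cases "j' \<le> j")
  case True
  then have "j' * m \<le> j * m" by (rule mult_le_mono1)
  with assms show ?thesis by linarith
next
  case False
  then have "Suc j * m \<le> j' * m" by (intro mult_le_mono1) simp
  with assms show ?thesis by simp
qed

lemma mem_concat_blocks:
  "w \<in> set (concat (map (block M) [a..<b])) \<longleftrightarrow> (\<exists>b'. a \<le> b' \<and> b' < b \<and> w \<in> set (block M b'))"
  by auto

lemma set_block_word: "w \<in> set (block M b) \<Longrightarrow> set w \<subseteq> range ltr_y \<union> {ltr_e b}"
  by (auto simp: set_block y_chunk_def block_tail_def set_y_run)

context
  fixes D :: "nat list list" and M :: nat
  assumes D_shape: "\<And>w. w \<in> set D \<Longrightarrow>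
    w \<noteq> [] \<and> set w \<subseteq> range ltr_u \<union> range ltr_y \<and> hd w \<in> insert (ltr_y 2) (range ltr_u)"
begin

lemma lz78_factor_block_head:
  assumes "1 \<le> b" "b \<le> M"
  shows "lz78_factor (D @ concat (map (block M) [1..<b])) (y_run 1 b)"
  unfolding lz78_factor_def
proof (intro conjI ballI)
  show "y_run 1 b \<noteq> []" using assms by simp
  have "y_run 1 (b - 1) \<in> set (block M (b - 1))" by (simp add: block_def)
  then show "butlast (y_run 1 b) \<in> set ([] # D @ concat (map (block M) [1..<b]))"
    using assms by (cases "b = 1") (auto simp: butlast_y_run)
next
  fix w assume w: "w \<in> set (D @ concat (map (block M) [1..<b]))"
  show "\<not> prefix (y_run 1 b) w"
  proof
    assume p: "prefix (y_run 1 b) w"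
    have "hd w = ltr_y 1" using hd_prefix[OF p] assms by simp
    then have "w \<notin> set D" using D_shape by fastforce
    then obtain b' where b': "1 \<le> b'" "b' < b" "w \<in> set (block M b')"
      using w by (auto simp: mem_concat_blocks)
    from b'(3) show False unfolding set_block
    proof (elim insertE imageE)
      assume "w = y_run 1 b'" then show False using prefix_length_le[OF p] b' by simp
    next
      assume "w = block_tail M b'"
      moreover have "0 < b" using assms by simp
      ultimately have "1 = M + 1 - (M - b') mod phase b'"
        using p prefix_y_run_block_tail by blast
      moreover have "(M - b') mod phase b' \<le> M - b'" by (rule mod_less_eq_dividend)
      ultimately show False using assms b' by linarith
    next
      fix j assume "w = y_chunk b' j"
      then show False using p assms b'(1) by (auto simp: y_chunk_def prefix_y_run_iff)
    qed
  qed
qed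

text \<open>Here y_chunk b j = y_s ... y_(s+m-1) with m = phase b. Its butlast is a run of an
  earlier block of phase m - 1, as the m - 1 consecutive indices of phase m - 1 represent all
  residues modulo m - 1. No earlier phrase starts with it: earlier blocks of phase m place their
  runs at other residues modulo m, and blocks of smaller phase have shorter runs and
  remainders.\<close>
lemma lz78_factor_y_chunk:
  assumes b: "2 \<le> b" and j: "j < (M - b) div phase b"
  shows "lz78_factor (D @ concat (map (block M) [1..<b]) @ y_run 1 b # map (y_chunk b) [0..<j])
    (y_chunk b j)"
proof -
  define m where "m = phase b"
  define s where "s = b + 1 + j * m"
  have m: "1 \<le> m" "phase_start m \<le> b" "b < phase_start m + m"
    using phase_bounds[OF b] unfolding m_def by auto
  have chunk: "y_chunk b j = y_run s m" unfolding y_chunk_def s_def m_def ..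
  have "Suc j * m \<le> (M - b) div m * m"
    using j unfolding m_def[symmetric] by (intro mult_le_mono1) simp
  also have "\<dots> \<le> M - b" by (rule div_times_less_eq_dividend)
  finally have fits: "s + m \<le> M + 1" using m(1) unfolding s_def by simp
  have butlast: "y_run s (m - 1) \<in> set ([] # concat (map (block M) [1..<b]))"
  proof (cases "m = 1")
    case False
    have "phase_start (m - 1) < s" "phase_start (Suc (m - 1)) \<le> b"
      using m unfolding s_def by (cases m; simp)+
    moreover have "1 \<le> m - 1" "s + (m - 1) \<le> M + 1" using False m fits by simp_all
    ultimately obtain b' where "2 \<le> b'" "b' < b" "y_run s (m - 1) \<in> set (block M b')"
      using y_run_in_block[of "m - 1" s M] by (metis order_less_le_trans)
    then show ?thesis by (auto simp: mem_concat_blocks)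
  qed simp
  have fresh: False
    if w: "w \<in> set (D @ concat (map (block M) [1..<b]) @ y_run 1 b # map (y_chunk b) [0..<j])"
      and p: "prefix (y_run s m) w" for w
  proof -
    have hd: "hd w = ltr_y s" using hd_prefix[OF p] m by simp
    have "2 < s" using b unfolding s_def by simp
    then have "w \<notin> set D" using D_shape hd by fastforce
    moreover have "w \<notin> set (y_run 1 b # map (y_chunk b) [0..<j])"
      using hd m b \<open>2 < s\<close> unfolding s_def by (auto simp: y_chunk_def m_def[symmetric])
    ultimately obtain b' where b': "1 \<le> b'" "b' < b" "w \<in> set (block M b')"
      using w by (auto simp: mem_concat_blocks)
    have "phase b' \<le> m" unfolding m_def using b' by (intro phase_mono) simp
    from b'(3) show False unfolding set_block
    proof (elim insertE imageE)
      assume "w = y_run 1 b'" then show False using p m \<open>2 < s\<close> by (simp add: prefix_y_run_iff)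
    next
      assume "w = block_tail M b'"
      then have "prefix (y_run s m) (block_tail M b')" using p by simp
      then have tail: "s = M + 1 - (M - b') mod phase b'" "m \<le> (M - b') mod phase b'"
        using prefix_y_run_block_tail[of m s M b'] m(1) by simp_all
      show False
      proof (cases "b' = 1")
        case True
        then show False using tail(1) \<open>2 < s\<close> phase_1 by simp
      next
        case False
        then have "(M - b') mod phase b' < phase b'"
          using b' phase_bounds(1)[of b'] by (intro mod_less_divisor) simp
        then show False using tail(2) \<open>phase b' \<le> m\<close> by linarith
      qed
    next
      fix j' assume "w = y_chunk b' j'"
      then have "prefix (y_run s m) (y_run (b' + 1 + j' * phase b') (phase b'))"
        using p by (simp add: y_chunk_def)
      then have s: "s = b' + 1 + j' * phase b'" and "m \<le> phase b'"
        using m(1) by (simp_all add: prefix_y_run_iff)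
      then have "phase b' = m" using \<open>phase b' \<le> m\<close> by simp
      moreover have "2 \<le> b'" using \<open>phase b' = m\<close> m(1) b'(1) phase_1 by (cases "b' = 1") auto
      ultimately have "phase_start m \<le> b'" using phase_bounds(2)[of b'] by simp
      then have "b + j * m \<noteq> b' + j' * m" using m b'(2) by (intro add_mult_ne_add_mult) simp_all
      then show False using s \<open>phase b' = m\<close> unfolding s_def by simp
    qed
  qed
  show ?thesis
    unfolding lz78_factor_def chunk using butlast m fresh by (auto simp: butlast_y_run)
qed

lemma lz78_factor_block_tail:
  assumes b: "1 \<le> b" "b \<le> M" and D_first: "b = 1 \<Longrightarrow> y_run 2 (M - 1) \<in> set D"
  shows "lz78_factor (D @ concat (map (block M) [1..<b]) @
    y_run 1 b # map (y_chunk b) [0..<(M - b) div phase b]) (block_tail M b)"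
proof -
  define r where "r = (M - b) mod phase b"
  have tail: "block_tail M b = y_run (M + 1 - r) r @ [ltr_e b]"
    unfolding block_tail_def r_def ..
  have butlast: "y_run (M + 1 - r) r \<in> set ([] # D @ concat (map (block M) [1..<b]))"
  proof (cases "b = 1")
    case True
    then have "y_run (M + 1 - r) r = y_run 2 (M - 1)"
      using b phase_1 unfolding r_def by (cases M) simp_all
    with True D_first show ?thesis by simp
  next
    case False
    then have b2: "2 \<le> b" using b by simp
    show ?thesis
    proof (cases "r = 0")
      case False
      have "r < phase b" unfolding r_def using phase_bounds(1)[OF b2] by simp
      then have "phase_start (Suc r) \<le> b"
        using phase_bounds(2)[OF b2] phase_start_mono[of "Suc r" "phase b"] by simp
      moreover have "r \<le> M - b" unfolding r_def by (rule mod_less_eq_dividend)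
      ultimately have "1 \<le> r" "phase_start r < M + 1 - r" "M + 1 - r + r \<le> M + 1"
        using False by simp_all
      then obtain b' where "b' < phase_start (Suc r)" "y_run (M + 1 - r) r \<in> set (block M b')"
          "2 \<le> b'"
        by (rule y_run_in_block)
      with \<open>phase_start (Suc r) \<le> b\<close> show ?thesis by (auto simp: mem_concat_blocks)
    qed simp
  qed
  have no_e: "ltr_e b \<notin> set w"
    if "w \<in> set (D @ concat (map (block M) [1..<b]) @
      y_run 1 b # map (y_chunk b) [0..<(M - b) div phase b])" for w
  proof -
    from that consider "w \<in> set D" | b' where "b' < b" "w \<in> set (block M b')"
      | "set w \<subseteq> range ltr_y"
      using set_y_run_subset by (auto simp: mem_concat_blocks y_chunk_def)
    then show ?thesis
    proof cases
      case 1 then show ?thesis using D_shape by fastforce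
    next
      case 2 then show ?thesis using set_block_word by fastforce
    qed auto
  qed
  show ?thesis
    unfolding lz78_factor_def tail
  proof (intro conjI ballI)
    fix w assume "w \<in> set (D @ concat (map (block M) [1..<b]) @
      y_run 1 b # map (y_chunk b) [0..<(M - b) div phase b])"
    then have "ltr_e b \<notin> set w" by (rule no_e)
    then show "\<not> prefix (y_run (M + 1 - r) r @ [ltr_e b]) w" using set_mono_prefix by fastforce
  qed (use butlast in auto)
qed

lemma lz78_factors_blocks:
  assumes "B \<le> M" "y_run 2 (M - 1) \<in> set D"
  shows "lz78_factors D (concat (map (block M) [1..<Suc B]))"
proof (rule lz78_factors_concat_map_upt)
  fix b assume b: "1 \<le> b" "b < Suc B"
  let ?E = "D @ concat (map (block M) [1..<b])"
  have "lz78_factors (?E @ [y_run 1 b]) (map (y_chunk b) [0..<(M - b) div phase b])"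
  proof (rule lz78_factors_map_upt)
    fix j assume j: "j < (M - b) div phase b"
    then have "b \<noteq> 1" using phase_1 by auto
    with b j show "lz78_factor ((?E @ [y_run 1 b]) @ map (y_chunk b) [0..<j]) (y_chunk b j)"
      using lz78_factor_y_chunk by simp
  qed
  moreover have
    "block M b = [y_run 1 b] @ map (y_chunk b) [0..<(M - b) div phase b] @ [block_tail M b]"
    by (simp add: block_def)
  ultimately show "lz78_factors ?E (block M b)"
    using b assms lz78_factor_block_head lz78_factor_block_tail by simp
qed

end

section \<open>The factorizations of the two texts\<close>

definition parse_U :: "nat \<Rightarrow> nat list list" where
  "parse_U L = map u_run [1..<Suc L]"

definition parse_G :: "nat \<Rightarrow> nat list list" where
  "parse_G M = concat (map (\<lambda>i. [[ltr_u (Suc i)], y_run 1 i]) [1..<Suc M])"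

definition parse_Q :: "nat \<Rightarrow> nat \<Rightarrow> nat list list" where
  "parse_Q M B = map (\<lambda>b. y_run 1 M @ [ltr_e b]) [1..<Suc B]"

definition padding :: "nat \<Rightarrow> nat \<Rightarrow> nat list list" where
  "padding k r = map (\<lambda>i. replicate i ltr_a) [1..<Suc k] @ map (\<lambda>j. [ltr_p j]) [1..<Suc r]"

lemma lz78_factors_parse_U: "lz78_factors [] (parse_U L)"
  unfolding parse_U_def
proof (rule lz78_factors_map_upt)
  fix i :: nat assume "1 \<le> i"
  then show "lz78_factor ([] @ map u_run [1..<i]) (u_run i)"
    by (intro lz78_factor_by_head) (auto simp: butlast_u_run)
qed

lemma lz78_factors_parse_G: "lz78_factors (parse_U L) (parse_G M)"
  unfolding parse_G_def
proof (rule lz78_factors_concat_map_upt)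
  fix i :: nat assume i: "1 \<le> i"
  let ?D = "parse_U L @ concat (map (\<lambda>i. [[ltr_u (Suc i)], y_run 1 i]) [1..<i])"
  have "lz78_factor ?D [ltr_u (Suc i)]"
    by (rule lz78_factor_by_head) (use i in \<open>auto simp: parse_U_def\<close>)
  moreover have "lz78_factor (?D @ [[ltr_u (Suc i)]]) (y_run 1 i)"
    by (rule lz78_factor_by_head) (use i in \<open>auto simp: parse_U_def butlast_y_run\<close>)
  ultimately show "lz78_factors ?D [[ltr_u (Suc i)], y_run 1 i]" by simp
qed

lemma set_parse_U_G: "w \<in> set (parse_U L @ parse_G M) \<Longrightarrow> set w \<subseteq> range ltr_u \<union> range ltr_y"
  by (auto simp: parse_U_def parse_G_def set_u_run set_y_run)

lemma lz78_factors_parse_Q: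
  assumes "1 \<le> M"
  shows "lz78_factors (parse_U L @ parse_G M) (parse_Q M B)"
  unfolding parse_Q_def
proof (rule lz78_factors_map_upt)
  fix b :: nat
  let ?D = "(parse_U L @ parse_G M) @ map (\<lambda>b. y_run 1 M @ [ltr_e b]) [1..<b]"
  have "y_run 1 M \<in> set (parse_G M)" using assms by (force simp: parse_G_def)
  moreover have "ltr_e b \<notin> set w" if "w \<in> set ?D" for w
  proof (cases "w \<in> set (parse_U L @ parse_G M)")
    case True
    then show ?thesis using set_parse_U_G by fastforce
  next
    case False
    with that show ?thesis by (auto simp: set_y_run)
  qed
  ultimately show "lz78_factor ?D (y_run 1 M @ [ltr_e b])"
    by (intro lz78_factor_by_fresh_letter[where c = "ltr_e b"]) auto
qed

lemma lz78_factors_padding: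
  assumes "\<And>w. w \<in> set D \<Longrightarrow> set w \<subseteq> range ltr_u \<union> range ltr_y \<union> range ltr_e"
  shows "lz78_factors D (padding k r)"
  unfolding padding_def lz78_factors_append
proof
  show "lz78_factors D (map (\<lambda>i. replicate i ltr_a) [1..<Suc k])"
  proof (rule lz78_factors_map_upt)
    fix i :: nat assume i: "1 \<le> i"
    let ?E = "D @ map (\<lambda>i. replicate i ltr_a) [1..<i]"
    have "butlast (replicate i ltr_a) \<in> set ([] # ?E)"
      using i by (cases "i = 1") (auto simp: butlast_conv_take)
    moreover have "length w < i" if "w \<in> set ?E" "w \<noteq> []" "hd w = ltr_a" for w
    proof -
      have "w \<notin> set D" using that(2,3) assms hd_in_set by fastforce
      then show ?thesis using that(1) by auto
    qed
    ultimately show "lz78_factor ?E (replicate i ltr_a)"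
      using i by (intro lz78_factor_by_head) auto
  qed
  show "lz78_factors (D @ map (\<lambda>i. replicate i ltr_a) [1..<Suc k])
      (map (\<lambda>j. [ltr_p j]) [1..<Suc r])"
    by (rule lz78_factors_map_upt, rule lz78_factor_by_fresh_letter) (use assms in fastforce)+
qed

definition parse_U' :: "nat \<Rightarrow> nat list list" where
  "parse_U' L = concat (map (\<lambda>i. [u_run (i - 1), [ltr_u i]]) [2..<Suc L])"

definition parse_G' :: "nat \<Rightarrow> nat list list" where
  "parse_G' M = concat (map (\<lambda>i. [ltr_u (Suc i), ltr_y 1] #
     (if 2 \<le> i then [y_run 2 (i - 1)] else [])) [1..<Suc M])"

definition parse_Q' :: "nat \<Rightarrow> nat \<Rightarrow> nat list list" where
  "parse_Q' M B = concat (map (block M) [1..<Suc B])"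

lemma concat_parse_U: "1 \<le> L \<Longrightarrow> concat (parse_U L) = ltr_u 1 # concat (parse_U' L)"
proof (induction L rule: dec_induct)
  case (step L)
  have "parse_U (Suc L) = parse_U L @ [u_run (Suc L)]"
    "parse_U' (Suc L) = parse_U' L @ [u_run L, [ltr_u (Suc L)]]"
    using step.hyps by (simp_all add: parse_U_def parse_U'_def)
  with step.IH show ?case by (simp add: u_run_Suc)
qed (simp add: parse_U_def parse_U'_def u_run_def)

lemma concat_parse_G': "concat (parse_G' M) = concat (parse_G M)"
proof -
  have "concat ([ltr_u (Suc i), ltr_y 1] # (if 2 \<le> i then [y_run 2 (i - 1)] else [])) =
    concat [[ltr_u (Suc i)], y_run 1 i]" if i: "i \<in> set [1..<Suc M]" for i
  proof -
    have "i \<noteq> 0" using i by auto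
    then obtain i' where "i = Suc i'" using not0_implies_Suc by blast
    then show ?thesis using y_run_Suc[of 1 i'] by (cases i') (simp_all add: numeral_2_eq_2)
  qed
  then have "map (\<lambda>i. concat ([ltr_u (Suc i), ltr_y 1] #
      (if 2 \<le> i then [y_run 2 (i - 1)] else []))) [1..<Suc M] =
    map (\<lambda>i. concat [[ltr_u (Suc i)], y_run 1 i]) [1..<Suc M]"
    by (rule map_cong[OF refl])
  then show ?thesis unfolding parse_G'_def parse_G_def concat_concat_map by (rule arg_cong)
qed

lemma concat_parse_Q': "B \<le> M \<Longrightarrow> concat (parse_Q' M B) = concat (parse_Q M B)"
  unfolding parse_Q'_def parse_Q_def concat_concat_map
  by (intro arg_cong[where f = concat] map_cong) (auto simp: concat_block)

lemma mem_parse_U':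
  "w \<in> set (parse_U' L) \<Longrightarrow> \<exists>i. 2 \<le> i \<and> i \<le> L \<and> (w = u_run (i - 1) \<or> w = [ltr_u i])"
  by (auto simp: parse_U'_def)

lemma mem_parse_G':
  "w \<in> set (parse_G' M) \<Longrightarrow>
    (\<exists>i. 1 \<le> i \<and> i \<le> M \<and> w = [ltr_u (Suc i), ltr_y 1]) \<or> (\<exists>i. 2 \<le> i \<and> i \<le> M \<and> w = y_run 2 (i - 1))"
  by (auto simp: parse_G'_def split: if_splits)

context
  fixes D0 :: "nat list list"
  assumes D0: "\<And>w. w \<in> set D0 \<Longrightarrow> w = [ltr_u 0]"
begin

lemma lz78_factors_parse_U': "lz78_factors D0 (parse_U' L)"
  unfolding parse_U'_def
proof (rule lz78_factors_concat_map_upt)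
  fix i :: nat assume i: "2 \<le> i"
  let ?E = "D0 @ concat (map (\<lambda>i. [u_run (i - 1), [ltr_u i]]) [2..<i])"
  have E: "w = [ltr_u 0] \<or> (\<exists>i'. 2 \<le> i' \<and> i' < i \<and> (w = u_run (i' - 1) \<or> w = [ltr_u i']))"
    if "w \<in> set ?E" for w
    using that D0[of w] by auto
  have "lz78_factor ?E (u_run (i - 1))"
  proof (rule lz78_factor_by_head)
    show "butlast (u_run (i - 1)) \<in> set ([] # ?E)"
    proof (cases "i = 2")
      case False
      then have "u_run (i - 1 - 1) \<in> set (concat (map (\<lambda>i. [u_run (i - 1), [ltr_u i]]) [2..<i]))"
        using i by (intro mem_concat_map_uptI[of _ "i - 1"]) simp_all
      then show ?thesis by (simp add: butlast_u_run)
    qed (simp add: butlast_u_run)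
    fix w assume w: "w \<in> set ?E" and hd: "hd w = hd (u_run (i - 1))"
    from E[OF w] show "length w < length (u_run (i - 1))"
      using hd i by (elim disjE exE conjE) auto
  qed (use i in simp)
  moreover have "lz78_factor (?E @ [u_run (i - 1)]) [ltr_u i]"
  proof (rule lz78_factor_by_fresh_letter[where c = "ltr_u i"])
    fix w assume "w \<in> set (?E @ [u_run (i - 1)])"
    then consider "w \<in> set ?E" | "w = u_run (i - 1)" by auto
    then show "ltr_u i \<notin> set w"
    proof cases
      case 1
      from E[OF this] show ?thesis using i by (elim disjE exE conjE) (auto simp: set_u_run)
    qed (auto simp: set_u_run)
  qed simp_all
  ultimately show "lz78_factors ?E [u_run (i - 1), [ltr_u i]]" by simp
qed

lemma lz78_factors_parse_G':
  assumes "M < L"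
  shows "lz78_factors (D0 @ parse_U' L) (parse_G' M)"
  unfolding parse_G'_def
proof (rule lz78_factors_concat_map_upt)
  fix i :: nat assume i: "1 \<le> i" "i < Suc M"
  let ?G = "\<lambda>i. [ltr_u (Suc i), ltr_y 1] # (if 2 \<le> i then [y_run 2 (i - 1)] else [])"
  let ?E = "(D0 @ parse_U' L) @ concat (map ?G [1..<i])"
  have E: "w = [ltr_u 0] \<or> (\<exists>j. 2 \<le> j \<and> w = u_run (j - 1)) \<or> (\<exists>j. w = [ltr_u j]) \<or>
      (\<exists>i'. i' < i \<and> w = [ltr_u (Suc i'), ltr_y 1]) \<or> (\<exists>i'. 2 \<le> i' \<and> i' < i \<and> w = y_run 2 (i' - 1))"
    if "w \<in> set ?E" for w
  proof -
    from that consider "w \<in> set D0" | "w \<in> set (parse_U' L)"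
      | i' where "i' < i" "w \<in> set (?G i')" by auto
    then show ?thesis
    proof cases
      case 1 then show ?thesis using D0 by simp
    next
      case 2 then show ?thesis using mem_parse_U' by blast
    next
      case 3 then show ?thesis by (auto split: if_splits)
    qed
  qed
  have "lz78_factor ?E [ltr_u (Suc i), ltr_y 1]"
  proof (rule lz78_factor_by_head)
    have "[ltr_u (Suc i)] \<in> set (parse_U' L)"
      unfolding parse_U'_def using i assms by (intro mem_concat_map_uptI[of _ "Suc i"]) simp_all
    then show "butlast [ltr_u (Suc i), ltr_y 1] \<in> set ([] # ?E)" by simp
    fix w assume w: "w \<in> set ?E" and hd: "hd w = hd [ltr_u (Suc i), ltr_y 1]"
    from E[OF w] show "length w < length [ltr_u (Suc i), ltr_y 1]"
      using hd i by (elim disjE exE conjE) auto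
  qed simp
  moreover have "lz78_factor (?E @ [[ltr_u (Suc i), ltr_y 1]]) (y_run 2 (i - 1))" if "2 \<le> i"
  proof (rule lz78_factor_by_head)
    show "butlast (y_run 2 (i - 1)) \<in> set ([] # ?E @ [[ltr_u (Suc i), ltr_y 1]])"
    proof (cases "i = 2")
      case False
      then have "y_run 2 (i - 1 - 1) \<in> set (concat (map ?G [1..<i]))"
        using that by (intro mem_concat_map_uptI[of _ "i - 1"]) auto
      then show ?thesis by (simp add: butlast_y_run)
    qed (simp add: butlast_y_run)
    fix w assume w: "w \<in> set (?E @ [[ltr_u (Suc i), ltr_y 1]])" "w \<noteq> []"
      and hd: "hd w = hd (y_run 2 (i - 1))"
    from w(1) consider "w \<in> set ?E" | "w = [ltr_u (Suc i), ltr_y 1]" by auto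
    then show "length w < length (y_run 2 (i - 1))"
    proof cases
      case 1
      from E[OF this] show ?thesis using hd that by (elim disjE exE conjE) auto
    qed (use hd that in simp)
  qed (use that in simp)
  ultimately show "lz78_factors ?E (?G i)" by (cases "2 \<le> i") simp_all
qed

lemma lz78_factors_parse_Q':
  assumes "2 \<le> M" "B \<le> M"
  shows "lz78_factors (D0 @ parse_U' L @ parse_G' M) (parse_Q' M B)"
  unfolding parse_Q'_def
proof (rule lz78_factors_blocks)
  fix w assume "w \<in> set (D0 @ parse_U' L @ parse_G' M)"
  then consider "w \<in> set D0" | "w \<in> set (parse_U' L)" | "w \<in> set (parse_G' M)" by auto
  then show "w \<noteq> [] \<and> set w \<subseteq> range ltr_u \<union> range ltr_y \<and> hd w \<in> insert (ltr_y 2) (range ltr_u)"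
  proof cases
    case 1 then show ?thesis using D0[OF 1] by simp
  next
    case 2
    from mem_parse_U'[OF this] show ?thesis by (auto simp: set_u_run)
  next
    case 3
    from mem_parse_G'[OF this] show ?thesis by (auto simp: set_y_run)
  qed
next
  have "y_run 2 (M - 1) \<in> set (parse_G' M)"
    unfolding parse_G'_def using assms by (intro mem_concat_map_uptI[of _ M]) auto
  then show "y_run 2 (M - 1) \<in> set (D0 @ parse_U' L @ parse_G' M)" by simp
qed (use assms in simp)

end

text \<open>param_B S + 1 = phase_start (2 * S + 1), so blocks 2, ..., param_B S have phase at most 2 S
  and each consists of at least S - 1 factors.\<close>

definition param_M :: "nat \<Rightarrow> nat" where "param_M S = 4 * S * S"
definition param_L :: "nat \<Rightarrow> nat" where "param_L S = param_M S + 1"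
definition param_B :: "nat \<Rightarrow> nat" where "param_B S = 2 * S * S + S + 1"

definition parse_T :: "nat \<Rightarrow> nat \<Rightarrow> nat \<Rightarrow> nat list list" where
  "parse_T S k r =
    parse_U (param_L S) @ parse_G (param_M S) @ parse_Q (param_M S) (param_B S) @ padding k r"

definition parse_R :: "nat \<Rightarrow> nat \<Rightarrow> nat \<Rightarrow> nat list list" where
  "parse_R S k r =
    parse_U' (param_L S) @ parse_G' (param_M S) @ parse_Q' (param_M S) (param_B S) @ padding k r"

lemma param_B_less_param_M: "2 \<le> S \<Longrightarrow> param_B S < param_M S"
proof -
  assume "2 \<le> S"
  then have "2 * (2 * S) \<le> 2 * (S * S)" by simp
  with \<open>2 \<le> S\<close> show ?thesis unfolding param_B_def param_M_def by linarith
qed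

lemma two_le_param_M: "1 \<le> S \<Longrightarrow> 2 \<le> param_M S"
  unfolding param_M_def by simp

lemma concat_parse_T: "2 \<le> S \<Longrightarrow> concat (parse_T S k r) = ltr_u 1 # concat (parse_R S k r)"
  using param_B_less_param_M[of S]
  by (simp add: parse_T_def parse_R_def param_L_def concat_parse_U concat_parse_G' concat_parse_Q')

lemma letters_parse_U_G_Q:
  "w \<in> set (parse_U L @ parse_G M @ parse_Q M B) \<Longrightarrow> set w \<subseteq> range ltr_u \<union> range ltr_y \<union> range ltr_e"
  using set_parse_U_G[of w L M] by (auto simp: parse_Q_def set_y_run)

lemma lz78_factors_parse_T:
  assumes "2 \<le> S"
  shows "lz78_factors [] (parse_T S k r)"
proof -
  let ?L = "param_L S" and ?M = "param_M S" and ?B = "param_B S"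
  have "lz78_factors [] (parse_U ?L)" by (rule lz78_factors_parse_U)
  moreover have "lz78_factors (parse_U ?L) (parse_G ?M)" by (rule lz78_factors_parse_G)
  moreover have "lz78_factors (parse_U ?L @ parse_G ?M) (parse_Q ?M ?B)"
    using two_le_param_M[of S] assms by (intro lz78_factors_parse_Q) simp
  moreover have "lz78_factors (parse_U ?L @ parse_G ?M @ parse_Q ?M ?B) (padding k r)"
    by (rule lz78_factors_padding) (rule letters_parse_U_G_Q)
  ultimately show ?thesis by (simp add: parse_T_def)
qed

lemma letters_parse_U'_G'_Q':
  assumes "\<And>w. w \<in> set D0 \<Longrightarrow> w = [ltr_u 0]"
    and "w \<in> set (D0 @ parse_U' L @ parse_G' M @ parse_Q' M B)"
  shows "set w \<subseteq> range ltr_u \<union> range ltr_y \<union> range ltr_e"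
proof -
  from assms(2) consider "w \<in> set D0" | "w \<in> set (parse_U' L)" | "w \<in> set (parse_G' M)"
    | b where "w \<in> set (block M b)"
    by (auto simp: parse_Q'_def)
  then show ?thesis
  proof cases
    case 1 then show ?thesis using assms(1)[OF 1] by simp
  next
    case 2 from mem_parse_U'[OF this] show ?thesis by (auto simp: set_u_run)
  next
    case 3 from mem_parse_G'[OF this] show ?thesis by (auto simp: set_y_run)
  next
    case 4 from set_block_word[OF this] show ?thesis by auto
  qed
qed

lemma lz78_factors_parse_R:
  assumes "2 \<le> S" and D0: "\<And>w. w \<in> set D0 \<Longrightarrow> w = [ltr_u 0]"
  shows "lz78_factors D0 (parse_R S k r)"
proof -
  let ?L = "param_L S" and ?M = "param_M S" and ?B = "param_B S"
  have "lz78_factors D0 (parse_U' ?L)" using D0 by (rule lz78_factors_parse_U')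
  moreover have "lz78_factors (D0 @ parse_U' ?L) (parse_G' ?M)"
  proof (rule lz78_factors_parse_G'[OF D0])
    show "param_M S < param_L S" unfolding param_L_def by simp
  qed
  moreover have "lz78_factors (D0 @ parse_U' ?L @ parse_G' ?M) (parse_Q' ?M ?B)"
    using D0 by (rule lz78_factors_parse_Q')
      (use assms(1) two_le_param_M[of S] param_B_less_param_M[of S] in simp_all)
  moreover have "lz78_factors (D0 @ parse_U' ?L @ parse_G' ?M @ parse_Q' ?M ?B) (padding k r)"
    by (rule lz78_factors_padding) (rule letters_parse_U'_G'_Q'[OF D0])
  ultimately show ?thesis by (simp add: parse_R_def)
qed

lemma length_parse_T: "length (parse_T S k r) = param_L S + 2 * param_M S + param_B S + k + r"
proof -
  have "length (parse_G M) = 2 * M" for M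
    unfolding parse_G_def by (induction M) simp_all
  then show ?thesis by (simp add: parse_T_def parse_U_def parse_Q_def padding_def)
qed

lemma phase_le_of_le_param_B: "b \<le> param_B S \<Longrightarrow> phase b \<le> 2 * S"
proof (rule phase_le)
  have "2 * phase_start (Suc (2 * S)) + Suc (2 * S) = Suc (2 * S) * Suc (2 * S) + 4"
    by (rule phase_start_closed_form)
  then have "phase_start (Suc (2 * S)) = param_B S + 1"
    unfolding param_B_def by (simp add: algebra_simps)
  then show "b < phase_start (Suc (2 * S))" if "b \<le> param_B S" using that by simp
qed

lemma length_block_ge:
  assumes S: "2 \<le> S" and b: "2 \<le> b" "b \<le> param_B S"
  shows "S - 1 \<le> length (block (param_M S) b)"
proof -
  let ?M = "param_M S" and ?B = "param_B S"
  have "(S - 1) * (2 * S) + ?B \<le> ?M"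
    using S unfolding param_M_def param_B_def by (cases S) (simp_all add: algebra_simps)
  then have "(S - 1) * (2 * S) \<le> ?M - ?B" by simp
  then have "S - 1 \<le> (?M - ?B) div (2 * S)"
    using S by (simp add: less_eq_div_iff_mult_less_eq)
  also have "\<dots> \<le> (?M - b) div (2 * S)" using b by (simp add: div_le_mono)
  also have "\<dots> \<le> (?M - b) div phase b"
    using phase_bounds(1)[OF b(1)] phase_le_of_le_param_B[OF b(2)] by (intro div_le_mono2) simp_all
  also have "\<dots> \<le> length (block ?M b)" by (simp add: length_block)
  finally show ?thesis .
qed

lemma length_parse_R_ge:
  assumes "2 \<le> S"
  shows "2 * S ^ 2 * (S - 1) \<le> length (parse_R S k r)"
proof -
  let ?M = "param_M S" and ?B = "param_B S"
  have "length [2..<Suc ?B] = 2 * S ^ 2 + S"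
    unfolding param_B_def using assms by (simp add: power2_eq_square)
  then have "2 * S ^ 2 * (S - 1) \<le> (S - 1) * length [2..<Suc ?B]"
    by (metis le_add1 mult.commute mult_le_mono2)
  also have "\<dots> \<le> length (concat (map (block ?M) [2..<Suc ?B]))"
    by (rule length_concat_map_ge) (use assms length_block_ge in auto)
  also have "\<dots> \<le> length (parse_R S k r)"
  proof -
    have "[1..<Suc ?B] = 1 # [Suc 1..<Suc ?B]" by (rule upt_conv_Cons) (simp add: param_B_def)
    then have "parse_Q' ?M ?B = block ?M 1 @ concat (map (block ?M) [2..<Suc ?B])"
      unfolding parse_Q'_def by (simp del: upt_Suc add: numeral_2_eq_2)
    then show ?thesis by (simp add: parse_R_def)
  qed
  finally show ?thesis .
qed

definition base_length :: "nat \<Rightarrow> nat" where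
  "base_length S = 24 * S ^ 4 + 4 * S ^ 3 + 18 * S ^ 2 + S + 2"

lemma length_concat_parse_T:
  "2 * length (concat (parse_T S k r)) = 2 * base_length S + k * (k + 1) + 2 * r"
proof -
  have U: "2 * length (concat (parse_U L)) = L * (L + 1)" for L
    by (induction L) (simp_all add: parse_U_def)
  have G: "2 * length (concat (parse_G M)) = M * (M + 1) + 2 * M" for M
    by (induction M) (simp_all add: parse_G_def)
  have Q: "length (concat (parse_Q M B)) = B * (M + 1)" for M B
    by (induction B) (simp_all add: parse_Q_def)
  have a: "2 * length (concat (map (\<lambda>i. replicate i ltr_a) [1..<Suc k])) = k * (k + 1)"
    by (induction k) simp_all
  have p: "length (concat (map (\<lambda>j. [ltr_p j]) [1..<Suc r])) = r"
    by (induction r) simp_all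
  let ?L = "param_L S" and ?M = "param_M S" and ?B = "param_B S"
  have "2 * length (concat (parse_T S k r)) =
    ?L * (?L + 1) + (?M * (?M + 1) + 2 * ?M) + 2 * (?B * (?M + 1)) + k * (k + 1) + 2 * r"
    using U[of ?L] G[of ?M] Q[of ?M ?B] a p by (simp add: parse_T_def padding_def)
  also have "?L * (?L + 1) + (?M * (?M + 1) + 2 * ?M) + 2 * (?B * (?M + 1)) = 2 * base_length S"
    unfolding param_L_def param_M_def param_B_def base_length_def
    by (simp add: algebra_simps eval_nat_numeral)
  finally show ?thesis by simp
qed

lemma triangular_decomposition: "\<exists>k r. 2 * (p :: nat) = k * (k + 1) + 2 * r \<and> r \<le> k"
proof (induction p)
  case (Suc p)
  then obtain k r where kr: "2 * p = k * (k + 1) + 2 * r" "r \<le> k" by blast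
  show ?case
  proof (cases "r < k")
    case True
    with kr show ?thesis by (intro exI[of _ k] exI[of _ "Suc r"]) simp
  next
    case False
    with kr show ?thesis by (intro exI[of _ "Suc k"] exI[of _ 0]) (simp add: algebra_simps)
  qed
qed simp

lemma base_length_Suc:
  "base_length (Suc S) = base_length S + (96 * S ^ 3 + 156 * S ^ 2 + 144 * S + 47)"
proof -
  have "Suc S ^ 4 = S ^ 4 + 4 * S ^ 3 + 6 * S ^ 2 + 4 * S + 1"
    "Suc S ^ 3 = S ^ 3 + 3 * S ^ 2 + 3 * S + 1" "Suc S ^ 2 = S ^ 2 + 2 * S + 1"
    by (simp_all add: power_Suc power2_eq_square power3_eq_cube algebra_simps numeral_eq_Suc)
  then show ?thesis unfolding base_length_def by simp
qed

lemma base_length_Suc_le: "1 \<le> S \<Longrightarrow> base_length (Suc S) \<le> 625 * S ^ 4"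
proof -
  assume "1 \<le> S"
  then have "S ^ 3 \<le> S ^ 4" "S ^ 2 \<le> S ^ 4" "S \<le> S ^ 4" "1 \<le> S ^ 4"
    using power_increasing[of _ 4 S] power_increasing[of 1 4 S] by simp_all
  then show ?thesis unfolding base_length_Suc unfolding base_length_def by linarith
qed

lemma base_length_bracket:
  assumes "base_length N \<le> n"
  obtains S where "N \<le> S" "base_length S \<le> n" "n < base_length (Suc S)"
proof -
  let ?P = "\<lambda>S. base_length S \<le> n"
  have bound: "S \<le> n" if "?P S" for S using that unfolding base_length_def by simp
  define S where "S = (GREATEST S. ?P S)"
  have "?P S" unfolding S_def by (rule GreatestI_nat[where P = ?P, OF assms bound])
  moreover have "N \<le> S" unfolding S_def by (rule Greatest_le_nat[where P = ?P, OF assms bound])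
  moreover have "n < base_length (Suc S)"
  proof (rule ccontr)
    assume "\<not> n < base_length (Suc S)"
    then have "Suc S \<le> S" unfolding S_def by (intro Greatest_le_nat[where P = ?P, OF _ bound]) simp
    then show False by simp
  qed
  ultimately show ?thesis using that by simp
qed

lemma lz78_sensitive_text:
  assumes "base_length 2000 \<le> n"
  obtains S R where "2000 \<le> S" "length R + 1 = n" "n \<le> 625 * S ^ 4"
    "1 \<le> z78 (ltr_u 1 # R)" "z78 (ltr_u 1 # R) \<le> 17 * S ^ 2"
    "2 * S ^ 2 * (S - 1) \<le> z78 R" "2 * S ^ 2 * (S - 1) \<le> z78 (ltr_u 0 # R)"
proof -
  obtain S where S: "2000 \<le> S" "base_length S \<le> n" "n < base_length (Suc S)"
    using assms by (rule base_length_bracket)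
  obtain k r where kr: "2 * (n - base_length S) = k * (k + 1) + 2 * r" "r \<le> k"
    using triangular_decomposition by blast
  define R where "R = concat (parse_R S k r)"
  have "2 \<le> S" using S by simp
  have T: "concat (parse_T S k r) = ltr_u 1 # R"
    unfolding R_def using \<open>2 \<le> S\<close> by (rule concat_parse_T)
  have "length R + 1 = n"
    using length_concat_parse_T[of S k r] kr S(2) unfolding T by simp
  moreover have "n \<le> 625 * S ^ 4" using S base_length_Suc_le[of S] by simp
  moreover have z_T: "z78 (ltr_u 1 # R) = 14 * S ^ 2 + S + 2 + k + r"
    using z78_concat[OF lz78_factors_parse_T[OF \<open>2 \<le> S\<close>, of k r]]
    unfolding T length_parse_T param_L_def param_M_def param_B_def by (simp add: power2_eq_square)
  moreover have "k < S ^ 2"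
  proof -
    have "k * k < 2 * (96 * S ^ 3 + 156 * S ^ 2 + 144 * S + 47)"
      using kr S(3) base_length_Suc[of S] by (simp add: algebra_simps)
    also have "\<dots> \<le> 886 * S ^ 3"
    proof -
      have "S ^ 2 \<le> S ^ 3" "S \<le> S ^ 3" "1 \<le> S ^ 3"
        using \<open>2 \<le> S\<close> power_increasing[of _ 3 S] power_increasing[of 1 3 S] by simp_all
      then show ?thesis by simp
    qed
    also have "\<dots> \<le> S * S ^ 3" using S by simp
    finally have "k * k < S ^ 2 * S ^ 2" by (simp add: power_add[symmetric] eval_nat_numeral)
    then show ?thesis using mult_le_mono[of "S ^ 2" k "S ^ 2" k] by (meson not_less)
  qed
  moreover have "S + 2 \<le> S ^ 2"
  proof -
    have "2 * S \<le> S * S" using \<open>2 \<le> S\<close> by (rule mult_le_mono1)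
    then show ?thesis using \<open>2 \<le> S\<close> unfolding power2_eq_square by linarith
  qed
  moreover have "z78 R = length (parse_R S k r)"
    unfolding R_def using \<open>2 \<le> S\<close> by (intro z78_concat lz78_factors_parse_R) simp_all
  moreover have "z78 (ltr_u 0 # R) = length ([ltr_u 0] # parse_R S k r)"
  proof -
    have "lz78_factor [] [ltr_u 0]" by (simp add: lz78_factor_def)
    then have "lz78_factors [] ([ltr_u 0] # parse_R S k r)"
      using lz78_factors_parse_R[OF \<open>2 \<le> S\<close>, of "[[ltr_u 0]]"] by simp
    then show ?thesis unfolding R_def using z78_concat by fastforce
  qed
  ultimately show ?thesis
    using that S(1) length_parse_R_ge[OF \<open>2 \<le> S\<close>, of k r] kr(2) by simp
qed

section \<open>Asymptotics\<close>

lemma powr_quarters_le: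
  fixes n x :: real
  assumes "0 \<le> n" "n \<le> x ^ 4" "0 < x"
  shows "n powr (1/4) \<le> x" "n powr (3/4) \<le> x ^ 3"
proof -
  have n_le: "n \<le> x powr 4" using assms(2,3) by (simp add: powr_realpow)
  have "n powr (1/4) \<le> (x powr 4) powr (1/4)"
    using n_le assms(1) by (intro powr_mono2) simp_all
  also have "\<dots> = x powr (4 * (1/4))" by (rule powr_powr)
  also have "\<dots> = x" using assms(3) by simp
  finally show "n powr (1/4) \<le> x" .
  have "n powr (3/4) \<le> (x powr 4) powr (3/4)"
    using n_le assms(1) by (intro powr_mono2) simp_all
  also have "\<dots> = x powr (4 * (3/4))" by (rule powr_powr)
  also have "\<dots> = x ^ 3" using assms(3) by simp
  finally show "n powr (3/4) \<le> x ^ 3" .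
qed

lemma sensitivity_estimates:
  fixes S z z' n :: real
  assumes S: "2000 \<le> S" and z: "1 \<le> z" "z \<le> 17 * S ^ 2"
    and z': "2 * S ^ 2 * (S - 1) \<le> z'" and n: "0 \<le> n" "n \<le> 625 * S ^ 4"
  shows "(1/85) * n powr (1/4) \<le> z' / z"
    and "(1/72) * z powr (3/2) \<le> z' - z"
    and "(1/125) * n powr (3/4) \<le> z' - z"
proof -
  have "0 < S" using S by simp
  have "2000 * S ^ 2 \<le> S * S ^ 2" using S by (intro mult_right_mono) simp_all
  then have cube_le_diff: "S ^ 3 \<le> z' - z"
    using z z' by (simp add: algebra_simps power2_eq_square power3_eq_cube)
  then have cube_le: "S ^ 3 \<le> z'" using z by simp
  have "0 \<le> z'" using cube_le zero_less_power[OF \<open>0 < S\<close>, of 3] by linarith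
  have "n \<le> (5 * S) ^ 4" "0 < 5 * S" using n(2) \<open>0 < S\<close> by (simp_all add: power_mult_distrib)
  note roots = powr_quarters_le[OF n(1) this]
  have "(5 * S) ^ 3 = 125 * S ^ 3" by (simp add: power_mult_distrib)
  have "(1/85) * n powr (1/4) \<le> S ^ 3 / (17 * S ^ 2)"
    using roots(1) \<open>0 < S\<close> by (simp add: power2_eq_square power3_eq_cube)
  also have "\<dots> \<le> z' / z"
    using cube_le z \<open>0 < S\<close> \<open>0 \<le> z'\<close> by (intro frac_le) simp_all
  finally show "(1/85) * n powr (1/4) \<le> z' / z" .
  have "sqrt z \<le> sqrt (17 * S ^ 2)" using z(2) by (rule real_sqrt_le_mono)
  also have "\<dots> = sqrt 17 * S" using \<open>0 < S\<close> by (simp add: real_sqrt_mult)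
  also have "\<dots> \<le> 4.2 * S"
  proof -
    have "sqrt 17 \<le> 4.2" by (rule real_le_lsqrt) (simp_all add: power2_eq_square)
    then show ?thesis using \<open>0 < S\<close> by simp
  qed
  finally have sqrt_le: "sqrt z \<le> 4.2 * S" .
  have "z powr (3/2) = z powr (1 + 1/2)" by simp
  also have "\<dots> = z powr 1 * z powr (1/2)" by (rule powr_add)
  also have "\<dots> = z * sqrt z" using z by (simp add: powr_half_sqrt)
  also have "\<dots> \<le> 17 * S ^ 2 * (4.2 * S)" using z sqrt_le by (intro mult_mono) simp_all
  also have "\<dots> \<le> 72 * S ^ 3" using \<open>0 < S\<close> by (simp add: power2_eq_square power3_eq_cube)
  finally have "z powr (3/2) \<le> 72 * S ^ 3" .
  then show "(1/72) * z powr (3/2) \<le> z' - z" using cube_le_diff by linarith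
  show "(1/125) * n powr (3/4) \<le> z' - z"
    using roots(2) cube_le_diff \<open>(5 * S) ^ 3 = 125 * S ^ 3\<close> by linarith
qed

definition lz78_gap :: "nat \<Rightarrow> nat list \<Rightarrow> nat list \<Rightarrow> bool" where
  "lz78_gap n T T' \<longleftrightarrow>
    (1/85) * real n powr (1/4) \<le> real (z78 T') / real (z78 T) \<and>
    (1/72) * real (z78 T) powr (3/2) \<le> real (z78 T') - real (z78 T) \<and>
    (1/125) * real n powr (3/4) \<le> real (z78 T') - real (z78 T)"

lemma lz78_gapI:
  assumes "2000 \<le> S" "n \<le> 625 * S ^ 4" "1 \<le> z78 T" "z78 T \<le> 17 * S ^ 2"
    and "2 * S ^ 2 * (S - 1) \<le> z78 T'"
  shows "lz78_gap n T T'"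
proof -
  have "real n \<le> 625 * real S ^ 4" using of_nat_mono[OF assms(2), where 'a = real] by simp
  moreover have "real (z78 T) \<le> 17 * real S ^ 2"
    using of_nat_mono[OF assms(4), where 'a = real] by simp
  moreover have "2 * real S ^ 2 * (real S - 1) \<le> real (z78 T')"
    using of_nat_mono[OF assms(5), where 'a = real] assms(1) by (simp add: of_nat_diff)
  ultimately show ?thesis using assms
    unfolding lz78_gap_def by (intro conjI sensitivity_estimates[of "real S"]) simp_all
qed

lemma lz78_gap_witnesses:
  "\<forall>\<^sub>F n in sequentially. \<exists>T Ts Td :: nat list.
     length T = n \<and> length Ts = n \<and> length Td = n - 1 \<and> ed T Ts = 1 \<and> ed T Td = 1 \<and>
     lz78_gap n T Ts \<and> lz78_gap n T Td"
  unfolding eventually_sequentially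
proof (intro exI[of _ "base_length 2000"] allI impI)
  fix n assume "base_length 2000 \<le> n"
  then obtain S R where SR: "2000 \<le> S" "length R + 1 = n" "n \<le> 625 * S ^ 4"
    "1 \<le> z78 (ltr_u 1 # R)" "z78 (ltr_u 1 # R) \<le> 17 * S ^ 2"
    "2 * S ^ 2 * (S - 1) \<le> z78 R" "2 * S ^ 2 * (S - 1) \<le> z78 (ltr_u 0 # R)"
    by (rule lz78_sensitive_text)
  then show "\<exists>T Ts Td :: nat list.
     length T = n \<and> length Ts = n \<and> length Td = n - 1 \<and> ed T Ts = 1 \<and> ed T Td = 1 \<and>
     lz78_gap n T Ts \<and> lz78_gap n T Td"
    using ed_Cons_Cons_neq[of "ltr_u 1" "ltr_u 0" R] ed_Cons_self[of "ltr_u 1" R]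
    by (intro exI[of _ "ltr_u 1 # R"] exI[of _ "ltr_u 0 # R"] exI[of _ R]) (auto intro: lz78_gapI)
qed

lemma lz78_sensitivity_lower_bounds:
  "\<forall>\<^sub>F n in sequentially.
     (1/85) * real n powr (1/4) \<le> MS_sub (z78 :: nat list \<Rightarrow> nat) n \<and>
     (1/85) * real n powr (1/4) \<le> MS_del (z78 :: nat list \<Rightarrow> nat) n \<and>
     (1/125) * real n powr (3/4) \<le> AS_sub (z78 :: nat list \<Rightarrow> nat) n \<and>
     (1/125) * real n powr (3/4) \<le> AS_del (z78 :: nat list \<Rightarrow> nat) n"
  using lz78_gap_witnesses
proof (rule eventually_mono)
  fix n
  assume "\<exists>T Ts Td :: nat list.
     length T = n \<and> length Ts = n \<and> length Td = n - 1 \<and> ed T Ts = 1 \<and> ed T Td = 1 \<and>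
     lz78_gap n T Ts \<and> lz78_gap n T Td"
  then obtain T Ts Td :: "nat list" where
    len: "length T = n" "length Ts = n" "length Td = n - 1" and ed: "ed T Ts = 1" "ed T Td = 1"
    and gap: "lz78_gap n T Ts" "lz78_gap n T Td"
    by blast
  note sub = len(1,2) ed(1) and del = len(1,3) ed(2)
  show "(1/85) * real n powr (1/4) \<le> MS_sub (z78 :: nat list \<Rightarrow> nat) n \<and>
     (1/85) * real n powr (1/4) \<le> MS_del (z78 :: nat list \<Rightarrow> nat) n \<and>
     (1/125) * real n powr (3/4) \<le> AS_sub (z78 :: nat list \<Rightarrow> nat) n \<and>
     (1/125) * real n powr (3/4) \<le> AS_del (z78 :: nat list \<Rightarrow> nat) n"
    using gap MS_sub_ge[OF z78_le_length sub] MS_del_ge[OF z78_le_length del]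
      AS_sub_ge[OF z78_le_length sub] AS_del_ge[OF z78_le_length del]
    unfolding lz78_gap_def by (elim conjE) (intro conjI; linarith)
qed

theorem mainTheorem17:
  shows
   "(\<lambda>n. MS_sub (z78 :: nat list \<Rightarrow> nat) n) \<in> \<Omega>(\<lambda>n. real n powr (1/4)) \<and>
    (\<exists>c>0. \<forall>\<^sub>F n in sequentially. \<exists>T T' :: nat list.
        length T = n \<and> length T' = n \<and> ed T T' = 1 \<and>
        real (z78 T') - real (z78 T) \<ge> c * real (z78 T) powr (3/2)) \<and>
    (\<lambda>n. AS_sub (z78 :: nat list \<Rightarrow> nat) n) \<in> \<Omega>(\<lambda>n. real n powr (3/4)) \<and>
    (\<lambda>n. MS_del (z78 :: nat list \<Rightarrow> nat) n) \<in> \<Omega>(\<lambda>n. real n powr (1/4)) \<and>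
    (\<exists>c>0. \<forall>\<^sub>F n in sequentially. \<exists>T T' :: nat list.
        length T = n \<and> length T' = n - 1 \<and> ed T T' = 1 \<and>
        real (z78 T') - real (z78 T) \<ge> c * real (z78 T) powr (3/2)) \<and>
    (\<lambda>n. AS_del (z78 :: nat list \<Rightarrow> nat) n) \<in> \<Omega>(\<lambda>n. real n powr (3/4))"
proof -
  have sub: "\<forall>\<^sub>F n in sequentially. \<exists>T T' :: nat list.
      length T = n \<and> length T' = n \<and> ed T T' = 1 \<and> lz78_gap n T T'"
    and del: "\<forall>\<^sub>F n in sequentially. \<exists>T T' :: nat list.
      length T = n \<and> length T' = n - 1 \<and> ed T T' = 1 \<and> lz78_gap n T T'"
    using lz78_gap_witnesses by (auto elim!: eventually_mono)
  have power_gap: "\<exists>c>0. \<forall>\<^sub>F n in sequentially. \<exists>T T' :: nat list.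
      length T = n \<and> length T' = m n \<and> ed T T' = 1 \<and>
      real (z78 T') - real (z78 T) \<ge> c * real (z78 T) powr (3/2)"
    if "\<forall>\<^sub>F n in sequentially. \<exists>T T' :: nat list.
      length T = n \<and> length T' = m n \<and> ed T T' = 1 \<and> lz78_gap n T T'" for m :: "nat \<Rightarrow> nat"
    using that by (intro exI[of _ "1/72"]) (auto simp: lz78_gap_def elim!: eventually_mono)
  note bounds = lz78_sensitivity_lower_bounds
  have "(\<lambda>n. MS_sub (z78 :: nat list \<Rightarrow> nat) n) \<in> \<Omega>(\<lambda>n. real n powr (1/4))"
    using bounds by (intro bigomega_of_eventually_ge[of "1/85"]) (auto elim!: eventually_mono)
  moreover have "(\<lambda>n. MS_del (z78 :: nat list \<Rightarrow> nat) n) \<in> \<Omega>(\<lambda>n. real n powr (1/4))"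
    using bounds by (intro bigomega_of_eventually_ge[of "1/85"]) (auto elim!: eventually_mono)
  moreover have "(\<lambda>n. AS_sub (z78 :: nat list \<Rightarrow> nat) n) \<in> \<Omega>(\<lambda>n. real n powr (3/4))"
    using bounds by (intro bigomega_of_eventually_ge[of "1/125"]) (auto elim!: eventually_mono)
  moreover have "(\<lambda>n. AS_del (z78 :: nat list \<Rightarrow> nat) n) \<in> \<Omega>(\<lambda>n. real n powr (3/4))"
    using bounds by (intro bigomega_of_eventually_ge[of "1/125"]) (auto elim!: eventually_mono)
  ultimately show ?thesis using power_gap[OF sub] power_gap[OF del] by blast
qed

end
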